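(* Adopt the following setting with $n_p=2$. Let $P\subset\mathbb{R}^{2}$ be convex and compact, $\mathbf{f}:\mathbb{R}^{n_x}\times\mathbb{R}^2\to\mathbb{R}^{n_x}$, $Q\subset P$ the nonempty set of $\mathbf{p}\in P$ for which $\mathbf{f}(\mathbf{z},\mathbf{p})=\mathbf{0}$ has a solution, $\mathbf{x}:Q\to\mathbb{R}^{n_x}$ with $\mathbf{f}(\mathbf{x}(\mathbf{p}),\mathbf{p})=\mathbf{0}$, and $X=[\mathbf{x}^L,\mathbf{x}^U]$ with $\mathbf{x}(\mathbf{p})\in X$ for $\mathbf{p}\in Q$. Write $\mathbf{f}=(\tilde{\mathbf{f}},\mathbf{h})$ with $\mathbf{h}$ affine (values in $\mathbb{R}^{n_h}$) and no component of $\tilde{\mathbf{f}}$ affine; for each $\tilde i$ let $\tilde f_{\tilde i}^{cv}=\max_j\tilde f_{\tilde i}^{cv,j}$, $\tilde f_{\tilde i}^{cc}=\min_j\tilde f_{\tilde i}^{cc,j}$ be convex/concave relaxations of $\tilde f_{\tilde i}$ on $X\times P$ with finitely many continuously differentiable convex pieces $\tilde f_{\tilde i}^{cv,j}$ and concave pieces $\tilde f_{\tilde i}^{cc,j}$. Let $\mathbf{g}$ collect all $\tilde f_{\tilde i}^{cv,j}$, $-\tilde f_{\tilde i}^{cc,j}$, $\mathbf{x}^L-\boldsymbol\xi$ and $\boldsymbol\xi-\mathbf{x}^U$. Fix $i$ and define $x_i^{cv}(\mathbf{p}):=\min\{\xi_i:\boldsymbol\xi\in\mathbb{R}^{n_x},\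 \mathbf{h}(\boldsymbol\xi,\mathbf{p})=\mathbf{0},\ \mathbf{g}(\boldsymbol\xi,\mathbf{p})\le\mathbf{0}\}$. Let $\hat{\mathbf{p}}\in\mathrm{int}(Q)$, suppose the gradients $\nabla_{\boldsymbol\xi}h_k$ ($k=1,\dots,n_h$) are linearly independent, and suppose there is a neighborhood $N\subset Q$ of $\hat{\mathbf{p}}$ such that each $\mathbf{p}\in N$ admits $\boldsymbol\xi_{\mathbf{p}}\in X$ with $\mathbf{h}(\boldsymbol\xi_{\mathbf{p}},\mathbf{p})=\mathbf{0}$ and $\mathbf{g}(\boldsymbol\xi_{\mathbf{p}},\mathbf{p})<\mathbf{0}$. Then $$\frac12\begin{bmatrix}[x_i^{cv}]'(\hat{\mathbf{p}};\mathbf{e}^{(1)})-[x_i^{cv}]'(\hat{\mathbf{p}};-\mathbf{e}^{(1)})\\ [x_i^{cv}]'(\hat{\mathbf{p}};\mathbf{e}^{(2)})-[x_i^{cv}]'(\hat{\mathbf{p}};-\mathbf{e}^{(2)})\end{bmatrix}$$ is a subgradient of $x_i^{cv}$ at $\hat{\mathbf{p}}$.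
   Context: $\mathbf{e}^{(1)},\mathbf{e}^{(2)}$ are the unit coordinate vectors in $\mathbb{R}^2$. Inequalities between vectors are componentwise. Convex (concave) relaxation of $\phi$ on $X\times P$: a convex function $\le\phi$ (concave function $\ge\phi$) there. $[\phi]'(\mathbf{p};\mathbf{d})=\lim_{\alpha\downarrow0}(\phi(\mathbf{p}+\alpha\mathbf{d})-\phi(\mathbf{p}))/\alpha$. A subgradient of the convex function $x_i^{cv}$ at $\hat{\mathbf{p}}$ is $\mathbf{s}$ with $x_i^{cv}(\boldsymbol\eta)\ge x_i^{cv}(\hat{\mathbf{p}})+\langle\mathbf{s},\boldsymbol\eta-\hat{\mathbf{p}}\rangle$ for all $\boldsymbol\eta$ in the domain. *)

theory Defs
  imports "HOL-Analysis.Analysis"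
begin

definition affine_fun :: "('a::real_inner \<Rightarrow> real) \<Rightarrow> bool" where
  "affine_fun \<phi> \<longleftrightarrow> (\<exists>a c. \<forall>w. \<phi> w = inner a w + c)"

definition C1_on :: "'a::real_inner set \<Rightarrow> ('a \<Rightarrow> real) \<Rightarrow> bool" where
  "C1_on U \<phi> \<longleftrightarrow> (\<exists>D. (\<forall>w\<in>U. GDERIV \<phi> w :> D w) \<and> continuous_on U D)"

definition feas ::
  "'n set \<Rightarrow> (real^'n \<Rightarrow> real^2 \<Rightarrow> real^'n)
   \<Rightarrow> ('n \<Rightarrow> nat) \<Rightarrow> ('n \<Rightarrow> nat \<Rightarrow> real^'n \<Rightarrow> real^2 \<Rightarrow> real)
   \<Rightarrow> ('n \<Rightarrow> nat) \<Rightarrow> ('n \<Rightarrow> nat \<Rightarrow> real^'n \<Rightarrow> real^2 \<Rightarrow> real)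
   \<Rightarrow> real^'n \<Rightarrow> real^'n \<Rightarrow> real^2 \<Rightarrow> (real^'n) set" where
  "feas H f mcv fcv mcc fcc xL xU p =
     {\<xi>. (\<forall>k\<in>H. f \<xi> p $ k = 0)
        \<and> (\<forall>k. k \<notin> H \<longrightarrow> (\<forall>j<mcv k. fcv k j \<xi> p \<le> 0) \<and> (\<forall>j<mcc k. - fcc k j \<xi> p \<le> 0))
        \<and> (\<forall>l. xL $ l - \<xi> $ l \<le> 0) \<and> (\<forall>l. \<xi> $ l - xU $ l \<le> 0)}"

definition xcv ::
  "'n set \<Rightarrow> (real^'n \<Rightarrow> real^2 \<Rightarrow> real^'n)
   \<Rightarrow> ('n \<Rightarrow> nat) \<Rightarrow> ('n \<Rightarrow> nat \<Rightarrow> real^'n \<Rightarrow> real^2 \<Rightarrow> real)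
   \<Rightarrow> ('n \<Rightarrow> nat) \<Rightarrow> ('n \<Rightarrow> nat \<Rightarrow> real^'n \<Rightarrow> real^2 \<Rightarrow> real)
   \<Rightarrow> real^'n \<Rightarrow> real^'n \<Rightarrow> 'n \<Rightarrow> real^2 \<Rightarrow> real" where
  "xcv H f mcv fcv mcc fcc xL xU i p =
     Inf ((\<lambda>\<xi>. \<xi> $ i) ` feas H f mcv fcv mcc fcc xL xU p)"

definition has_dirderiv :: "(real^2 \<Rightarrow> real) \<Rightarrow> real^2 \<Rightarrow> real^2 \<Rightarrow> real \<Rightarrow> bool" where
  "has_dirderiv \<phi> p d l \<longleftrightarrow> ((\<lambda>\<alpha>. (\<phi> (p + \<alpha> *\<^sub>R d) - \<phi> p) / \<alpha>) \<longlongrightarrow> l) (at_right 0)"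

definition dirderiv :: "(real^2 \<Rightarrow> real) \<Rightarrow> real^2 \<Rightarrow> real^2 \<Rightarrow> real" where
  "dirderiv \<phi> p d = Lim (at_right 0) (\<lambda>\<alpha>. (\<phi> (p + \<alpha> *\<^sub>R d) - \<phi> p) / \<alpha>)"

end

theory Submission
  imports Defs
begin

text \<open>The feasible set of the convex program is jointly convex in \<open>(\<xi>, p)\<close>: it is cut out by
  affine equations, convex and concave inequalities and a box. Hence \<open>xcv\<close>, the infimum
  of a linear function over the fibres of a convex set, is convex on the set of feasible parameters,
  and the Slater condition puts \<open>phat\<close> in the interior of that set. At an interior point a
  convex function has one-sided directional derivatives \<open>L\<close> that are positively homogeneous,
  subadditive and bounded by increments, \<open>L (\<eta> - p) \<le> \<phi> \<eta> - \<phi> p\<close>. In the plane, writing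
  \<open>\<eta> - p = u e\<^sub>1 + v e\<^sub>2\<close>, subadditivity applied to \<open>u e\<^sub>1 = (\<eta> - p) - v e\<^sub>2\<close> and to
  \<open>v e\<^sub>2 = (\<eta> - p) - u e\<^sub>1\<close> gives
  \<open>u (L e\<^sub>1 - L (- e\<^sub>1)) + v (L e\<^sub>2 - L (- e\<^sub>2)) \<le> 2 L (\<eta> - p)\<close>.\<close>

lemma tendsto_at_right_Inf_of_mono:
  fixes g :: "real \<Rightarrow> real"
  assumes "a < b"
    and mono: "\<And>x y. a < x \<Longrightarrow> x \<le> y \<Longrightarrow> y < b \<Longrightarrow> g x \<le> g y"
    and bdd: "bdd_below (g ` {a<..<b})"
  shows "(g \<longlongrightarrow> Inf (g ` {a<..<b})) (at_right a)"
proof (rule order_tendstoI)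
  fix y assume "y < Inf (g ` {a<..<b})"
  then have "\<forall>x\<in>{a<..<b}. y < g x"
    using cInf_lower[OF _ bdd] by (meson image_eqI less_le_trans)
  then show "\<forall>\<^sub>F x in at_right a. y < g x"
    using eventually_at_right_real[OF \<open>a < b\<close>] by (auto elim: eventually_mono)
next
  fix y assume "Inf (g ` {a<..<b}) < y"
  then obtain z where z: "a < z" "z < b" "g z < y"
    using cInf_lessD[of "g ` {a<..<b}" y] \<open>a < b\<close> by auto
  show "\<forall>\<^sub>F x in at_right a. g x < y"
    using eventually_at_right_real[OF \<open>a < z\<close>]
  proof (rule eventually_mono)
    fix x assume "x \<in> {a<..<z}"
    then have "g x \<le> g z" using mono z by auto
    then show "g x < y" using z by simp
  qed
qed

lemma interior_lineE:
  fixes p :: "'a::real_normed_vector"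
  assumes "p \<in> interior S"
  obtains \<delta> where "\<delta> > 0" "\<And>\<alpha>. \<bar>\<alpha>\<bar> < \<delta> \<Longrightarrow> p + \<alpha> *\<^sub>R d \<in> S"
proof -
  obtain r where r: "r > 0" "ball p r \<subseteq> S"
    using assms mem_interior by blast
  have n: "norm d + 1 > 0"
    using norm_ge_zero[of d] by linarith
  define \<delta> where "\<delta> = r / (norm d + 1)"
  have "p + \<alpha> *\<^sub>R d \<in> S" if "\<bar>\<alpha>\<bar> < \<delta>" for \<alpha>
  proof -
    have "\<bar>\<alpha>\<bar> * norm d \<le> \<bar>\<alpha>\<bar> * (norm d + 1)" by (simp add: mult_left_mono)
    also have "\<dots> < r"
      using that n by (simp add: \<delta>_def pos_less_divide_eq)
    finally show ?thesis using r by (auto simp: dist_norm)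
  qed
  moreover have "\<delta> > 0" using r n by (simp add: \<delta>_def)
  ultimately show ?thesis using that by blast
qed

lemma eventually_at_right_line_mem:
  fixes p :: "'a::real_normed_vector"
  assumes "p \<in> interior S"
  shows "\<forall>\<^sub>F \<alpha> in at_right 0. p + \<alpha> *\<^sub>R d \<in> S"
proof -
  obtain \<delta> where "\<delta> > 0" "\<And>\<alpha>. \<bar>\<alpha>\<bar> < \<delta> \<Longrightarrow> p + \<alpha> *\<^sub>R d \<in> S"
    using interior_lineE[OF assms] by blast
  then show ?thesis
    using eventually_at_right_real[of 0 \<delta>] by (auto elim: eventually_mono)
qed

lemma convex_on_line:
  assumes "convex_on S \<phi>"
  shows "convex_on {\<alpha>. p + \<alpha> *\<^sub>R d \<in> S} (\<lambda>\<alpha>. \<phi> (p + \<alpha> *\<^sub>R d))"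
proof -
  have line: "p + ((1 - t) * a + t * b) *\<^sub>R d = (1 - t) *\<^sub>R (p + a *\<^sub>R d) + t *\<^sub>R (p + b *\<^sub>R d)"
    for t a b :: real
    by (simp add: algebra_simps)
  show ?thesis
  proof (rule convex_onI)
    show "convex {\<alpha>. p + \<alpha> *\<^sub>R d \<in> S}"
      using convex_on_imp_convex[OF assms] by (simp add: convex_alt line)
  qed (simp add: line convex_onD[OF assms])
qed

lemma has_dirderiv_convex:
  fixes \<phi> :: "real^2 \<Rightarrow> real"
  assumes cvx: "convex_on S \<phi>" and p: "p \<in> interior S"
  shows "\<exists>l. has_dirderiv \<phi> p d l"
proof -
  obtain \<delta> where \<delta>: "\<delta> > 0" "\<And>\<alpha>. \<bar>\<alpha>\<bar> < \<delta> \<Longrightarrow> p + \<alpha> *\<^sub>R d \<in> S"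
    using interior_lineE[OF p] by blast
  define \<psi> where "\<psi> \<alpha> = \<phi> (p + \<alpha> *\<^sub>R d)" for \<alpha>
  have \<psi>: "convex_on {-\<delta><..<\<delta>} \<psi>"
    unfolding \<psi>_def using \<delta>(2) by (intro convex_on_subset[OF convex_on_line[OF cvx]]) auto
  \<comment> \<open>the difference quotient, written as a slope in the shape used by \<open>convex_on_slope_le\<close>\<close>
  define g where "g \<alpha> = (\<psi> 0 - \<psi> \<alpha>) / (0 - \<alpha>)" for \<alpha>
  have mono: "g a \<le> g b" if "0 < a" "a \<le> b" "b < \<delta>" for a b
  proof (cases "a = b")
    case False
    show ?thesis
      unfolding g_def by (rule convex_on_slope_le(1)[OF \<psi>]) (use False that \<delta>(1) in auto)
  qed simp
  define m where "m = (\<psi> (-\<delta>/2) - \<psi> 0) / (-\<delta>/2 - 0)"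
  have low: "m \<le> g a" if "0 < a" "a < \<delta>" for a
  proof -
    have "m \<le> (\<psi> (-\<delta>/2) - \<psi> a) / (-\<delta>/2 - a)"
      unfolding m_def by (rule convex_on_slope_le(1)[OF \<psi>]) (use that \<delta>(1) in auto)
    also have "\<dots> \<le> g a"
      unfolding g_def by (rule convex_on_slope_le(2)[OF \<psi>]) (use that \<delta>(1) in auto)
    finally show ?thesis .
  qed
  have bdd: "bdd_below (g ` {0<..<\<delta>})"
    using low by (intro bdd_belowI2[of _ m]) auto
  have "(g \<longlongrightarrow> Inf (g ` {0<..<\<delta>})) (at_right 0)"
    by (rule tendsto_at_right_Inf_of_mono) (use \<delta>(1) mono bdd in auto)
  moreover have "g = (\<lambda>\<alpha>. (\<phi> (p + \<alpha> *\<^sub>R d) - \<phi> p) / \<alpha>)"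
    by (simp add: fun_eq_iff g_def \<psi>_def minus_divide_left del: divide_minus_left)
  ultimately show ?thesis
    unfolding has_dirderiv_def by auto
qed

lemma dirderiv_eqI:
  assumes "has_dirderiv \<phi> p d l"
  shows "dirderiv \<phi> p d = l"
  using assms unfolding has_dirderiv_def dirderiv_def by (intro tendsto_Lim) auto

lemma has_dirderiv_dirderiv_convex:
  fixes \<phi> :: "real^2 \<Rightarrow> real"
  assumes "convex_on S \<phi>" and "p \<in> interior S"
  shows "has_dirderiv \<phi> p d (dirderiv \<phi> p d)"
  using has_dirderiv_convex[OF assms, of d] dirderiv_eqI by metis

lemma has_dirderiv_scaleR:
  assumes "has_dirderiv \<phi> p d l" and "c > 0"
  shows "has_dirderiv \<phi> p (c *\<^sub>R d) (c * l)"
proof -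
  have "filterlim (\<lambda>\<alpha>. c * \<alpha>) (at_right 0) (at_right 0)"
    using filtermap_times_pos_at_right[OF \<open>c > 0\<close>, of 0] by (simp add: filterlim_def)
  from filterlim_compose[OF assms(1)[unfolded has_dirderiv_def] this]
  have "((\<lambda>\<alpha>. c * ((\<phi> (p + (c * \<alpha>) *\<^sub>R d) - \<phi> p) / (c * \<alpha>))) \<longlongrightarrow> c * l) (at_right 0)"
    by (intro tendsto_mult_left)
  moreover have "c * ((\<phi> (p + (c * \<alpha>) *\<^sub>R d) - \<phi> p) / (c * \<alpha>)) = (\<phi> (p + \<alpha> *\<^sub>R (c *\<^sub>R d)) - \<phi> p) / \<alpha>"
    for \<alpha>
    using \<open>c > 0\<close> by (simp add: mult.commute)
  ultimately show ?thesis
    unfolding has_dirderiv_def by simp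
qed

lemma dirderiv_scaleR:
  fixes \<phi> :: "real^2 \<Rightarrow> real"
  assumes "convex_on S \<phi>" and "p \<in> interior S" and "c \<ge> 0"
  shows "dirderiv \<phi> p (c *\<^sub>R d) = c * dirderiv \<phi> p d"
proof (cases "c = 0")
  case True
  then show ?thesis by (intro dirderiv_eqI) (simp add: has_dirderiv_def)
next
  case False
  with assms show ?thesis
    by (intro dirderiv_eqI has_dirderiv_scaleR has_dirderiv_dirderiv_convex) auto
qed

lemma dirderiv_add_le:
  fixes \<phi> :: "real^2 \<Rightarrow> real"
  assumes cvx: "convex_on S \<phi>" and p: "p \<in> interior S"
  shows "dirderiv \<phi> p (d1 + d2) \<le> dirderiv \<phi> p d1 + dirderiv \<phi> p d2"
proof -
  let ?q = "\<lambda>d \<alpha>. (\<phi> (p + \<alpha> *\<^sub>R d) - \<phi> p) / \<alpha>"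
  have ev: "\<forall>\<^sub>F \<alpha> in at_right 0. ?q (d1 + d2) \<alpha> \<le> (?q (2 *\<^sub>R d1) \<alpha> + ?q (2 *\<^sub>R d2) \<alpha>) / 2"
    using eventually_conj[OF eventually_at_right_line_mem[OF p, of "2 *\<^sub>R d1"]
        eventually_conj[OF eventually_at_right_line_mem[OF p, of "2 *\<^sub>R d2"] eventually_at_right_less]]
  proof (rule eventually_mono)
    fix \<alpha> :: real
    assume \<alpha>: "p + \<alpha> *\<^sub>R 2 *\<^sub>R d1 \<in> S \<and> p + \<alpha> *\<^sub>R 2 *\<^sub>R d2 \<in> S \<and> 0 < \<alpha>"
    have "p + \<alpha> *\<^sub>R (d1 + d2) = (1 - 1/2) *\<^sub>R (p + \<alpha> *\<^sub>R 2 *\<^sub>R d1) + (1/2) *\<^sub>R (p + \<alpha> *\<^sub>R 2 *\<^sub>R d2)"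
      by (simp add: vec_eq_iff field_simps)
    then have "\<phi> (p + \<alpha> *\<^sub>R (d1 + d2)) \<le> (1 - 1/2) * \<phi> (p + \<alpha> *\<^sub>R 2 *\<^sub>R d1) + 1/2 * \<phi> (p + \<alpha> *\<^sub>R 2 *\<^sub>R d2)"
      using convex_onD[OF cvx, of "1/2"] \<alpha> by simp
    then have "?q (d1 + d2) \<alpha>
        \<le> ((\<phi> (p + \<alpha> *\<^sub>R 2 *\<^sub>R d1) - \<phi> p) + (\<phi> (p + \<alpha> *\<^sub>R 2 *\<^sub>R d2) - \<phi> p)) / 2 / \<alpha>"
      using \<alpha> by (intro divide_right_mono) auto
    also have "\<dots> = (?q (2 *\<^sub>R d1) \<alpha> + ?q (2 *\<^sub>R d2) \<alpha>) / 2"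
      using \<alpha> by (simp add: field_simps)
    finally show "?q (d1 + d2) \<alpha> \<le> (?q (2 *\<^sub>R d1) \<alpha> + ?q (2 *\<^sub>R d2) \<alpha>) / 2" .
  qed
  have lim: "((\<lambda>\<alpha>. ?q d \<alpha>) \<longlongrightarrow> dirderiv \<phi> p d) (at_right 0)" for d
    using has_dirderiv_dirderiv_convex[OF cvx p] unfolding has_dirderiv_def .
  have avg: "((\<lambda>\<alpha>. (?q (2 *\<^sub>R d1) \<alpha> + ?q (2 *\<^sub>R d2) \<alpha>) / 2)
      \<longlongrightarrow> (dirderiv \<phi> p (2 *\<^sub>R d1) + dirderiv \<phi> p (2 *\<^sub>R d2)) / 2) (at_right 0)"
    by (intro tendsto_divide tendsto_add lim tendsto_const) simp
  have "dirderiv \<phi> p (d1 + d2) \<le> (dirderiv \<phi> p (2 *\<^sub>R d1) + dirderiv \<phi> p (2 *\<^sub>R d2)) / 2"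
    by (rule tendsto_le[OF trivial_limit_at_right_real avg lim ev])
  then show ?thesis
    using dirderiv_scaleR[OF cvx p, of 2] by simp
qed

lemma dirderiv_le_diff:
  fixes \<phi> :: "real^2 \<Rightarrow> real"
  assumes cvx: "convex_on S \<phi>" and p: "p \<in> interior S" and \<eta>: "\<eta> \<in> S"
  shows "dirderiv \<phi> p (\<eta> - p) \<le> \<phi> \<eta> - \<phi> p"
proof -
  have "p \<in> S"
    using p interior_subset by blast
  have ev: "\<forall>\<^sub>F \<alpha> in at_right 0. (\<phi> (p + \<alpha> *\<^sub>R (\<eta> - p)) - \<phi> p) / \<alpha> \<le> \<phi> \<eta> - \<phi> p"
    using eventually_at_right_real[OF zero_less_one]
  proof (rule eventually_mono)
    fix \<alpha> :: real assume \<alpha>: "\<alpha> \<in> {0<..<1}"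
    have "p + \<alpha> *\<^sub>R (\<eta> - p) = (1 - \<alpha>) *\<^sub>R p + \<alpha> *\<^sub>R \<eta>"
      by (simp add: algebra_simps)
    then have "\<phi> (p + \<alpha> *\<^sub>R (\<eta> - p)) \<le> (1 - \<alpha>) * \<phi> p + \<alpha> * \<phi> \<eta>"
      using convex_onD[OF cvx, of \<alpha> p \<eta>] \<alpha> \<eta> \<open>p \<in> S\<close> by simp
    then show "(\<phi> (p + \<alpha> *\<^sub>R (\<eta> - p)) - \<phi> p) / \<alpha> \<le> \<phi> \<eta> - \<phi> p"
      using \<alpha> by (simp add: field_simps)
  qed
  have lim: "((\<lambda>\<alpha>. (\<phi> (p + \<alpha> *\<^sub>R (\<eta> - p)) - \<phi> p) / \<alpha>) \<longlongrightarrow> dirderiv \<phi> p (\<eta> - p)) (at_right 0)"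
    using has_dirderiv_dirderiv_convex[OF cvx p] unfolding has_dirderiv_def .
  show ?thesis
    by (rule tendsto_le[OF trivial_limit_at_right_real tendsto_const lim ev])
qed

lemma convex_on_subgradient_dirderiv_axis:
  fixes \<phi> :: "real^2 \<Rightarrow> real"
  assumes cvx: "convex_on S \<phi>" and p: "p \<in> interior S" and \<eta>: "\<eta> \<in> S"
  shows "\<phi> p + inner (\<chi> k. (dirderiv \<phi> p (axis k 1) - dirderiv \<phi> p (- axis k 1)) / 2) (\<eta> - p) \<le> \<phi> \<eta>"
proof -
  let ?L = "dirderiv \<phi> p"
  define e1 e2 :: "real^2" where "e1 = axis 1 1" and "e2 = axis 2 1"
  define w where "w = \<eta> - p"
  define u v where "u = w $ 1" and "v = w $ 2"
  have odd: "?L (c *\<^sub>R e) - ?L (- (c *\<^sub>R e)) = c * (?L e - ?L (- e))" for c e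
  proof (cases "c \<ge> 0")
    case True
    then show ?thesis
      using dirderiv_scaleR[OF cvx p True, of e] dirderiv_scaleR[OF cvx p True, of "- e"]
      by (simp add: right_diff_distrib)
  next
    case False
    then have "- c \<ge> 0" by simp
    then show ?thesis
      using dirderiv_scaleR[OF cvx p \<open>- c \<ge> 0\<close>, of e] dirderiv_scaleR[OF cvx p \<open>- c \<ge> 0\<close>, of "- e"]
      by (simp add: algebra_simps)
  qed
  have w: "w = u *\<^sub>R e1 + v *\<^sub>R e2"
    unfolding vec_eq_iff forall_2 u_def v_def e1_def e2_def by (simp add: axis_def)
  have "?L (u *\<^sub>R e1) \<le> ?L w + ?L (- (v *\<^sub>R e2))"
    using dirderiv_add_le[OF cvx p, of "w" "- (v *\<^sub>R e2)"] by (simp add: w)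
  moreover have "?L (v *\<^sub>R e2) \<le> ?L w + ?L (- (u *\<^sub>R e1))"
    using dirderiv_add_le[OF cvx p, of "w" "- (u *\<^sub>R e1)"] by (simp add: w)
  ultimately have sum: "u * (?L e1 - ?L (- e1)) + v * (?L e2 - ?L (- e2)) \<le> 2 * ?L w"
    unfolding odd[symmetric] by simp
  have "inner (\<chi> k. (?L (axis k 1) - ?L (- axis k 1)) / 2) w
      = (u * (?L e1 - ?L (- e1)) + v * (?L e2 - ?L (- e2))) / 2"
    unfolding inner_vec_def sum_2 u_def v_def e1_def e2_def by (simp add: add_divide_distrib mult.commute)
  also have "\<dots> \<le> ?L w"
    using sum by argo
  also have "\<dots> \<le> \<phi> \<eta> - \<phi> p"
    unfolding w_def by (rule dirderiv_le_diff[OF cvx p \<eta>])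
  finally show ?thesis
    unfolding w_def by linarith
qed

lemma convex_sublevel:
  assumes "convex_on S g"
  shows "convex {x \<in> S. g x \<le> a}"
proof (rule convexI)
  fix x y and u v :: real
  assume x: "x \<in> {x \<in> S. g x \<le> a}" and y: "y \<in> {x \<in> S. g x \<le> a}"
    and uv: "0 \<le> u" "0 \<le> v" "u + v = 1"
  have "u *\<^sub>R x + v *\<^sub>R y \<in> S"
    using convexD[OF convex_on_imp_convex[OF assms]] x y uv by blast
  moreover have "g (u *\<^sub>R x + v *\<^sub>R y) \<le> a"
    using convex_lower[OF assms, of x y u v] x y uv by (auto simp: max_def split: if_splits)
  ultimately show "u *\<^sub>R x + v *\<^sub>R y \<in> {x \<in> S. g x \<le> a}"
    by simp
qed

lemma convex_superlevel:
  assumes "concave_on S g"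
  shows "convex {x \<in> S. a \<le> g x}"
  using convex_sublevel[of S "\<lambda>x. - g x" "- a"] assms by (simp add: concave_on_def)

lemma convex_affine_fun_zero:
  assumes "affine_fun h"
  shows "convex {w. h w = 0}"
proof -
  obtain a c where "\<And>w. h w = inner a w + c"
    using assms unfolding affine_fun_def by blast
  then have "{w. h w = 0} = {w. inner a w = - c}"
    by auto
  then show ?thesis
    using convex_hyperplane by simp
qed

lemma convex_on_Inf_image:
  fixes F :: "'b::real_vector \<Rightarrow> 'a::real_vector set" and c :: "'a \<Rightarrow> real"
  assumes graph: "convex {(\<xi>, p). p \<in> D \<and> \<xi> \<in> F p}"
    and ne: "\<And>p. p \<in> D \<Longrightarrow> F p \<noteq> {}"
    and c: "convex_on UNIV c"
    and bdd: "\<And>p. p \<in> D \<Longrightarrow> bdd_below (c ` F p)"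
  shows "convex_on D (\<lambda>p. Inf (c ` F p))"
proof -
  have comb: "(1 - t) *\<^sub>R p + t *\<^sub>R q \<in> D \<and> (1 - t) *\<^sub>R \<xi> + t *\<^sub>R \<zeta> \<in> F ((1 - t) *\<^sub>R p + t *\<^sub>R q)"
    if "\<xi> \<in> F p" "\<zeta> \<in> F q" "p \<in> D" "q \<in> D" "0 \<le> t" "t \<le> 1" for p q \<xi> \<zeta> and t :: real
    using convex_alt[THEN iffD1, OF graph, rule_format, of "(\<xi>, p)" "(\<zeta>, q)" t] that by simp
  have "convex D"
    unfolding convex_alt using comb ne by (metis ex_in_conv)
  then show ?thesis
  proof (rule convex_onI[rotated])
    fix t :: real and p q
    assume t: "0 < t" "t < 1" and p: "p \<in> D" and q: "q \<in> D"
    show "Inf (c ` F ((1 - t) *\<^sub>R p + t *\<^sub>R q)) \<le> (1 - t) * Inf (c ` F p) + t * Inf (c ` F q)"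
    proof (rule field_le_epsilon)
      fix e :: real assume "0 < e"
      obtain \<xi> where \<xi>: "\<xi> \<in> F p" "c \<xi> < Inf (c ` F p) + e"
        using cInf_lessD[of "c ` F p" "Inf (c ` F p) + e"] ne[OF p] \<open>0 < e\<close> by auto
      obtain \<zeta> where \<zeta>: "\<zeta> \<in> F q" "c \<zeta> < Inf (c ` F q) + e"
        using cInf_lessD[of "c ` F q" "Inf (c ` F q) + e"] ne[OF q] \<open>0 < e\<close> by auto
      have "Inf (c ` F ((1 - t) *\<^sub>R p + t *\<^sub>R q)) \<le> c ((1 - t) *\<^sub>R \<xi> + t *\<^sub>R \<zeta>)"
        using comb[OF \<xi>(1) \<zeta>(1) p q] t bdd by (intro cInf_lower) auto
      also have "\<dots> \<le> (1 - t) * c \<xi> + t * c \<zeta>"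
        using convex_onD[OF c] t by simp
      also have "\<dots> \<le> (1 - t) * (Inf (c ` F p) + e) + t * (Inf (c ` F q) + e)"
        using \<xi> \<zeta> t by (intro add_mono mult_left_mono) auto
      also have "\<dots> = (1 - t) * Inf (c ` F p) + t * Inf (c ` F q) + e"
        by (simp add: algebra_simps)
      finally show "Inf (c ` F ((1 - t) *\<^sub>R p + t *\<^sub>R q)) \<le> (1 - t) * Inf (c ` F p) + t * Inf (c ` F q) + e" .
    qed
  qed
qed

lemma convex_feas_graph:
  fixes f :: "real^'n \<Rightarrow> real^2 \<Rightarrow> real^'n" and P :: "(real^2) set"
  assumes "convex P"
    and "\<And>k. k \<in> H \<Longrightarrow> affine_fun (\<lambda>(z, p). f z p $ k)"
    and "\<And>k j. k \<notin> H \<Longrightarrow> j < mcv k \<Longrightarrow> convex_on (cbox xL xU \<times> P) (\<lambda>(z, p). fcv k j z p)"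
    and "\<And>k j. k \<notin> H \<Longrightarrow> j < mcc k \<Longrightarrow> concave_on (cbox xL xU \<times> P) (\<lambda>(z, p). fcc k j z p)"
  shows "convex {(\<xi>, p). p \<in> P \<and> \<xi> \<in> feas H f mcv fcv mcc fcc xL xU p}"
proof -
  let ?B = "cbox xL xU \<times> P"
  have "{(\<xi>, p). p \<in> P \<and> \<xi> \<in> feas H f mcv fcv mcc fcc xL xU p}
      = ?B \<inter> (\<Inter>k\<in>H. {w. (\<lambda>(z, p). f z p $ k) w = 0})
          \<inter> (\<Inter>k\<in>-H. \<Inter>j\<in>{..<mcv k}. {w \<in> ?B. (\<lambda>(z, p). fcv k j z p) w \<le> 0})
          \<inter> (\<Inter>k\<in>-H. \<Inter>j\<in>{..<mcc k}. {w \<in> ?B. 0 \<le> (\<lambda>(z, p). fcc k j z p) w})"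
    unfolding feas_def by (auto simp: mem_box_cart)
  moreover have "convex \<dots>"
    using assms by (intro convex_Int convex_INT convex_Times convex_box(1) convex_affine_fun_zero
        convex_sublevel convex_superlevel) auto
  ultimately show ?thesis
    by simp
qed

theorem proposition5p3:
  fixes P :: "(real^2) set"
    and f :: "real^'n \<Rightarrow> real^2 \<Rightarrow> real^'n"
    and Q :: "(real^2) set"
    and x :: "real^2 \<Rightarrow> real^'n"
    and xL xU :: "real^'n"
    and H :: "'n set"
    and mcv mcc :: "'n \<Rightarrow> nat"
    and fcv fcc :: "'n \<Rightarrow> nat \<Rightarrow> real^'n \<Rightarrow> real^2 \<Rightarrow> real"
    and G :: "'n \<Rightarrow> real^'n"
    and i :: 'n
    and phat :: "real^2"
  defines "X \<equiv> {z :: real^'n. \<forall>l. xL $ l \<le> z $ l \<and> z $ l \<le> xU $ l}"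
  assumes P_convex: "convex P" and P_compact: "compact P"
    and Q_def: "Q = {p \<in> P. \<exists>z. f z p = 0}"
    and Q_ne: "Q \<noteq> {}"
    and x_sol: "\<forall>p\<in>Q. f (x p) p = 0"
    and x_in_X: "\<forall>p\<in>Q. x p \<in> X"
    (* f = (ftilde, h): H indexes the affine components h, the rest are ftilde *)
    and h_affine: "\<forall>k\<in>H. affine_fun (\<lambda>(z, p). f z p $ k)"
    and ftilde_not_affine: "\<forall>k. k \<notin> H \<longrightarrow> \<not> affine_fun (\<lambda>(z, p). f z p $ k)"
    (* convex relaxation ftilde^cv = max of convex C^1 pieces *)
    and cv_nonempty: "\<forall>k. k \<notin> H \<longrightarrow> mcv k \<ge> 1"
    and cv_convex: "\<forall>k j. k \<notin> H \<and> j < mcv k \<longrightarrow> convex_on (X \<times> P) (\<lambda>(z, p). fcv k j z p)"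
    and cv_C1: "\<forall>k j. k \<notin> H \<and> j < mcv k \<longrightarrow>
                  (\<exists>U. open U \<and> X \<times> P \<subseteq> U \<and> C1_on U (\<lambda>(z, p). fcv k j z p))"
    and cv_relax: "\<forall>k. k \<notin> H \<longrightarrow> (\<forall>z\<in>X. \<forall>p\<in>P.
                    Max ((\<lambda>j. fcv k j z p) ` {..<mcv k}) \<le> f z p $ k)"
    (* concave relaxation ftilde^cc = min of concave C^1 pieces *)
    and cc_nonempty: "\<forall>k. k \<notin> H \<longrightarrow> mcc k \<ge> 1"
    and cc_concave: "\<forall>k j. k \<notin> H \<and> j < mcc k \<longrightarrow> concave_on (X \<times> P) (\<lambda>(z, p). fcc k j z p)"
    and cc_C1: "\<forall>k j. k \<notin> H \<and> j < mcc k \<longrightarrow>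
                  (\<exists>U. open U \<and> X \<times> P \<subseteq> U \<and> C1_on U (\<lambda>(z, p). fcc k j z p))"
    and cc_relax: "\<forall>k. k \<notin> H \<longrightarrow> (\<forall>z\<in>X. \<forall>p\<in>P.
                    f z p $ k \<le> Min ((\<lambda>j. fcc k j z p) ` {..<mcc k}))"
    (* phat interior point of Q *)
    and phat_int: "phat \<in> interior Q"
    (* the xi-gradients G k of h_k (k in H) are linearly independent *)
    and G_grad: "\<forall>k\<in>H. \<forall>z p. GDERIV (\<lambda>\<xi>. f \<xi> p $ k) z :> G k"
    and G_indep: "\<forall>c :: 'n \<Rightarrow> real. (\<Sum>k\<in>H. c k *\<^sub>R G k) = 0 \<longrightarrow> (\<forall>k\<in>H. c k = 0)"
    (* Slater-type condition on a neighbourhood N of phat *)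
    and slater: "\<exists>N. open N \<and> phat \<in> N \<and> N \<subseteq> Q \<and>
                   (\<forall>p\<in>N. \<exists>\<xi>\<in>X. (\<forall>k\<in>H. f \<xi> p $ k = 0)
                      \<and> (\<forall>k. k \<notin> H \<longrightarrow> (\<forall>j<mcv k. fcv k j \<xi> p < 0) \<and> (\<forall>j<mcc k. - fcc k j \<xi> p < 0))
                      \<and> (\<forall>l. xL $ l - \<xi> $ l < 0) \<and> (\<forall>l. \<xi> $ l - xU $ l < 0))"
  shows "(\<forall>k::2. \<forall>\<sigma>\<in>{1, -1::real}. \<exists>l.
            has_dirderiv (xcv H f mcv fcv mcc fcc xL xU i) phat (\<sigma> *\<^sub>R axis k 1) l)
         \<and> (let \<phi> = xcv H f mcv fcv mcc fcc xL xU i;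
                s = (\<chi> k::2. (dirderiv \<phi> phat (axis k 1) - dirderiv \<phi> phat (- axis k 1)) / 2)
            in \<forall>\<eta>\<in>P. feas H f mcv fcv mcc fcc xL xU \<eta> \<noteq> {} \<longrightarrow>
                  \<phi> \<eta> \<ge> \<phi> phat + inner s (\<eta> - phat))"
proof -
  let ?F = "feas H f mcv fcv mcc fcc xL xU"
  let ?\<phi> = "xcv H f mcv fcv mcc fcc xL xU i"
  define D where "D = {p \<in> P. ?F p \<noteq> {}}"
  have "X = cbox xL xU"
    unfolding X_def by (auto simp: mem_box_cart)
  then have "convex {(\<xi>, p). p \<in> P \<and> \<xi> \<in> ?F p}"
    using cv_convex cc_concave h_affine by (intro convex_feas_graph[OF P_convex]) auto
  moreover have "{(\<xi>, p). p \<in> P \<and> \<xi> \<in> ?F p} = {(\<xi>, p). p \<in> D \<and> \<xi> \<in> ?F p}"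
    by (auto simp: D_def)
  ultimately have cvx: "convex_on D ?\<phi>"
    unfolding xcv_def
    by (intro convex_on_Inf_image convex_onI bdd_belowI2[of _ "xL $ i"])
      (auto simp: D_def feas_def)
  obtain N where N: "open N" "phat \<in> N" "N \<subseteq> Q"
    and slaterN: "\<forall>p\<in>N. \<exists>\<xi>\<in>X. (\<forall>k\<in>H. f \<xi> p $ k = 0)
        \<and> (\<forall>k. k \<notin> H \<longrightarrow> (\<forall>j<mcv k. fcv k j \<xi> p < 0) \<and> (\<forall>j<mcc k. - fcc k j \<xi> p < 0))
        \<and> (\<forall>l. xL $ l - \<xi> $ l < 0) \<and> (\<forall>l. \<xi> $ l - xU $ l < 0)"
    using slater by blast
  have "N \<subseteq> D"
  proof
    fix p assume "p \<in> N"
    then have "?F p \<noteq> {}"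
      using slaterN unfolding feas_def by (fastforce simp: less_imp_le)
    then show "p \<in> D"
      using \<open>p \<in> N\<close> N(3) unfolding Q_def D_def by auto
  qed
  then have phat: "phat \<in> interior D"
    using interior_maximal[OF _ N(1)] N(2) by blast
  show ?thesis
    using has_dirderiv_convex[OF cvx phat] convex_on_subgradient_dirderiv_axis[OF cvx phat]
    by (auto simp: Let_def D_def)
qed

end
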